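(* Let $k\ge4$, $t:=\lfloor(k-1)/2\rfloor$, and let $\mathcal{H}$ be a $(t,3k)$-superfull $3$-graph containing two disjoint sets $W_1,W_2\subseteq V(\mathcal{H})$, each of size at least $3k$, such that every pair $(w_1,w_2)\in W_1\times W_2$ has codegree exactly $t$ in $\mathcal{H}$. If $\mathcal{H}$ contains no copy of $C_k^3$, then there exists a $t$-set $L\subseteq V(\mathcal{H})\setminus(W_1\cup W_2)$ such that $N_{\mathcal{H}}(w_1w_2)=L$ for all pairs $(w_1,w_2)\in W_1\times W_2$.
   Context: For a $3$-graph $\mathcal{H}$: $\partial\mathcal{H}$ is the graph of pairs contained in some edge; $N_{\mathcal{H}}(uv)=\{w: uvw\in\mathcal{H}\}$ and the codegree is $d_{\mathcal{H}}(uv)=|N_{\mathcal{H}}(uv)|$. $\mathcal{H}$ is $d$-full if $d_{\mathcal{H}}(uv)\ge d$ for all $uv\in\partial\mathcal{H}$, and $(d,K)$-superfull if it is $d$-full and every edge of $\mathcal{H}$ contains at most one pair of vertices with codegree less than $K$. $C_k^3$ is the expansion of the $k$-cycle: add to each edge of $C_k$ a new vertex, distinct edges receiving distinct new vertices. *)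

theory Defs
  imports Main
begin

definition is_3graph :: "'a set set \<Rightarrow> bool" where
  "is_3graph H \<longleftrightarrow> finite H \<and> (\<forall>e\<in>H. card e = 3)"

definition verts :: "'a set set \<Rightarrow> 'a set" where
  "verts H = \<Union>H"

definition shadow :: "'a set set \<Rightarrow> 'a set set" where
  "shadow H = {p. card p = 2 \<and> (\<exists>e\<in>H. p \<subseteq> e)}"

definition nbhd :: "'a set set \<Rightarrow> 'a \<Rightarrow> 'a \<Rightarrow> 'a set" where
  "nbhd H u v = {w. {u, v, w} \<in> H}"

definition codeg :: "'a set set \<Rightarrow> 'a \<Rightarrow> 'a \<Rightarrow> nat" where
  "codeg H u v = card (nbhd H u v)"

definition full :: "nat \<Rightarrow> 'a set set \<Rightarrow> bool" where
  "full d H \<longleftrightarrow> (\<forall>u v. {u, v} \<in> shadow H \<longrightarrow> codeg H u v \<ge> d)"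

definition superfull :: "nat \<Rightarrow> nat \<Rightarrow> 'a set set \<Rightarrow> bool" where
  "superfull d K H \<longleftrightarrow> full d H \<and>
     (\<forall>e\<in>H. card {p. p \<subseteq> e \<and> card p = 2 \<and> (\<exists>u v. p = {u, v} \<and> codeg H u v < K)} \<le> 1)"

text \<open>H contains a copy of the expanded k-cycle C_k^3: distinct core vertices
  v_0..v_{k-1}, distinct new vertices u_0..u_{k-1} (disjoint from the core), and
  each triple {v_i, v_{i+1 mod k}, u_i} is an edge of H.\<close>
definition contains_Ck3 :: "nat \<Rightarrow> 'a set set \<Rightarrow> bool" where
  "contains_Ck3 k H \<longleftrightarrow> (\<exists>v u :: nat \<Rightarrow> 'a.
     inj_on v {..<k} \<and> inj_on u {..<k} \<and> v ` {..<k} \<inter> u ` {..<k} = {} \<and>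
     (\<forall>i<k. {v i, v ((i + 1) mod k), u i} \<in> H))"

end

theory Submission
  imports Defs
begin

text \<open>Call the vertices of \<open>N(w\<^sub>1w\<^sub>2)\<close>, for a cross pair \<open>w\<^sub>1 \<in> W\<^sub>1\<close>, \<open>w\<^sub>2 \<in> W\<^sub>2\<close>, its labels.
  Since \<open>w\<^sub>1w\<^sub>2\<close> has codegree \<open>t < 3k\<close>, superfullness gives every label \<open>x\<close> codegree at
  least \<open>3k\<close> with both \<open>w\<^sub>1\<close> and \<open>w\<^sub>2\<close>, and hence \<open>x \<notin> W\<^sub>1 \<union> W\<^sub>2\<close>. A closed walk alternating
  between \<open>W\<^sub>1\<close> and \<open>W\<^sub>2\<close> whose steps carry distinct labels of the pairs they join therefore
  yields a copy of \<open>C\<^sub>k\<^sup>3\<close>: a label serves either as the expansion vertex of the edge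
  \<open>w\<^sub>1w\<^sub>2x\<close> (one edge of the cycle) or as an extra core vertex between \<open>w\<^sub>1\<close> and \<open>w\<^sub>2\<close> (two
  edges), and the expansion vertices of the high-codegree pairs are then chosen greedily.
  If all cross pairs had one common label set \<open>L\<close> of size \<open>t\<close>, such walks would reach length
  at most \<open>2t < k\<close>; two cross pairs with different label sets supply the one extra label
  needed for length \<open>k \<in> {2t + 1, 2t + 2}\<close>.\<close>

section \<open>Expanded cycles from closed tours\<close>

definition next_key :: "('a \<times> 'b) list \<Rightarrow> 'a \<Rightarrow> 'a" where
  "next_key xs z = (if xs = [] then z else fst (hd xs))"

fun chained :: "('a \<times> 'b \<Rightarrow> 'a \<Rightarrow> bool) \<Rightarrow> ('a \<times> 'b) list \<Rightarrow> 'a \<Rightarrow> bool" where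
  "chained P [] z = True"
| "chained P (x # xs) z = (P x (next_key xs z) \<and> chained P xs z)"

lemma next_key_append: "next_key (xs @ ys) z = next_key xs (next_key ys z)"
  by (cases xs) (auto simp: next_key_def)

lemma chained_append:
  "chained P (xs @ ys) z \<longleftrightarrow> chained P xs (next_key ys z) \<and> chained P ys z"
  by (induction xs) (auto simp: next_key_append)

lemma chained_nth:
  assumes "chained P xs z" "i < length xs"
  shows "P (xs ! i) (if Suc i < length xs then fst (xs ! Suc i) else z)"
  using assms
proof (induction xs arbitrary: i)
  case (Cons x xs)
  show ?case
  proof (cases i)
    case 0
    then show ?thesis using Cons.prems by (cases xs) (auto simp: next_key_def)
  next
    case (Suc j)
    then show ?thesis using Cons.prems Cons.IH[of j] by auto
  qed
qed simp

fun expansion_edge :: "'a set set \<Rightarrow> 'a \<times> 'a \<Rightarrow> 'a \<Rightarrow> bool" where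
  "expansion_edge H (v, u) v' \<longleftrightarrow> {v, v', u} \<in> H"

lemma contains_Ck3_if_closed_chain:
  assumes "Q \<noteq> []" "distinct (map fst Q @ map snd Q)"
    and "chained (expansion_edge H) Q (fst (hd Q))"
  shows "contains_Ck3 (length Q) H"
proof -
  define k where "k = length Q"
  define v where "v = (\<lambda>i. fst (Q ! i))"
  define u where "u = (\<lambda>i. snd (Q ! i))"
  have "distinct (map fst Q)" "distinct (map snd Q)" using assms(2) by auto
  then have "inj_on v {..<k}" "inj_on u {..<k}"
    unfolding v_def u_def k_def inj_on_def by (auto simp: distinct_conv_nth)
  moreover have "v ` {..<k} \<inter> u ` {..<k} = {}"
  proof -
    have "v ` {..<k} \<subseteq> set (map fst Q)" "u ` {..<k} \<subseteq> set (map snd Q)"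
      unfolding v_def u_def k_def by auto
    then show ?thesis using assms(2) by auto
  qed
  moreover have "{v i, v ((i + 1) mod k), u i} \<in> H" if i: "i < k" for i
  proof -
    have "(i + 1) mod k = (if Suc i < k then Suc i else 0)"
      using i by (cases "Suc i < k") (auto simp: not_less dest: le_antisym)
    moreover have "hd Q = Q ! 0" using assms(1) by (simp add: hd_conv_nth)
    ultimately show ?thesis
      using chained_nth[OF assms(3), of i] i
      unfolding v_def u_def k_def by (cases "Q ! i") (auto split: if_splits)
  qed
  ultimately show ?thesis unfolding contains_Ck3_def k_def by blast
qed

text \<open>A skeleton edge either fixes its expansion vertex or, if it is \<^term>\<open>None\<close>,
  leaves it to be chosen greedily among the at least \<open>K\<close> common neighbours.\<close>
fun skeleton_edge :: "'a set set \<Rightarrow> nat \<Rightarrow> 'a \<times> 'a option \<Rightarrow> 'a \<Rightarrow> bool" where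
  "skeleton_edge H K (v, None) v' \<longleftrightarrow> K \<le> codeg H v v'"
| "skeleton_edge H K (v, Some u) v' \<longleftrightarrow> {v, v', u} \<in> H"

fun designated :: "('a \<times> 'a option) list \<Rightarrow> 'a list" where
  "designated [] = []"
| "designated ((v, None) # S) = designated S"
| "designated ((v, Some u) # S) = u # designated S"

lemma designated_append: "designated (xs @ ys) = designated xs @ designated ys"
  by (induction xs rule: designated.induct) auto

lemma length_designated_le: "length (designated S) \<le> length S"
  by (induction S rule: designated.induct) auto

lemma choose_expansion_vertices:
  assumes "chained (skeleton_edge H K) S z"
    and "set (designated S) \<subseteq> F" "distinct (designated S)"
    and "finite F" "card F + length S \<le> K"
  shows "\<exists>Q. map fst Q = map fst S \<and> chained (expansion_edge H) Q z \<and>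
    distinct (map snd Q) \<and> set (map snd Q) \<subseteq> set (designated S) \<union> - F"
  using assms
proof (induction S)
  case Nil
  show ?case by simp
next
  case (Cons s S)
  obtain v e where s: "s = (v, e)" by (cases s)
  define v' where "v' = next_key S z"
  have edge: "skeleton_edge H K (v, e) v'" and chain: "chained (skeleton_edge H K) S z"
    using Cons.prems(1) unfolding s v'_def by auto
  have "set (designated S) \<subseteq> F" "distinct (designated S)"
    using Cons.prems(2,3) unfolding s by (cases e; auto)+
  then obtain Q where Q: "map fst Q = map fst S" "chained (expansion_edge H) Q z"
      "distinct (map snd Q)" "set (map snd Q) \<subseteq> set (designated S) \<union> - F"
    using Cons.IH[OF chain] Cons.prems(4,5) by auto
  have next_Q: "next_key Q z = v'"
    using Q(1) unfolding v'_def next_key_def by (cases Q; cases S) auto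
  show ?case
  proof (cases e)
    case (Some u)
    have "u \<in> F" "u \<notin> set (designated S)"
      using Cons.prems(2,3) unfolding s Some by auto
    then have "u \<notin> set (map snd Q)" using Q(4) by blast
    then show ?thesis
      using edge Q next_Q unfolding s Some by (intro exI[of _ "(v, u) # Q"]) auto
  next
    case None
    have high: "K \<le> card (nbhd H v v')" using edge None by (simp add: codeg_def)
    have "card (F \<union> set (map snd Q)) \<le> card F + length S"
      using card_Un_le[of F "set (map snd Q)"] card_length[of "map snd Q"] Q(1)
      by (metis le_trans length_map nat_add_left_cancel_le)
    then have "card (F \<union> set (map snd Q)) < card (nbhd H v v')"
      using Cons.prems(5) high by simp
    then obtain u where u: "u \<in> nbhd H v v'" "u \<notin> F \<union> set (map snd Q)"
      by (metis Cons.prems(4) List.finite_set card_mono finite_UnI not_le subsetI)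
    then show ?thesis
      using Q next_Q unfolding s None nbhd_def by (intro exI[of _ "(v, u) # Q"]) auto
  qed
qed

lemma contains_Ck3_if_closed_skeleton:
  assumes "S \<noteq> []" "3 * length S \<le> K"
    and "chained (skeleton_edge H K) S (fst (hd S))"
    and "distinct (map fst S @ designated S)"
  shows "contains_Ck3 (length S) H"
proof -
  define F where "F = set (map fst S) \<union> set (designated S)"
  have "card F \<le> length S + length (designated S)"
    unfolding F_def by (metis card_Un_le card_length add_mono length_map order_trans)
  then have "card F + length S \<le> K"
    using length_designated_le[of S] assms(2) by simp
  moreover have "set (designated S) \<subseteq> F" "distinct (designated S)"
    using assms(4) unfolding F_def by auto
  ultimately obtain Q where Q: "map fst Q = map fst S" "chained (expansion_edge H) Q (fst (hd S))"
      "distinct (map snd Q)" "set (map snd Q) \<subseteq> set (designated S) \<union> - F"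
    using choose_expansion_vertices[OF assms(3)] unfolding F_def by blast
  have "length Q = length S" "Q \<noteq> []" using Q(1) assms(1) by (metis length_map, auto)
  moreover have "fst (hd Q) = fst (hd S)"
    using Q(1) assms(1) by (metis hd_map list.map_disc_iff)
  moreover have "distinct (map fst Q @ map snd Q)"
    using Q assms(4) unfolding F_def by auto
  ultimately show ?thesis using contains_Ck3_if_closed_chain[of Q H] Q(2) by simp
qed

text \<open>A hop from \<open>w\<close> to the next key \<open>v'\<close> via the label \<open>x\<close>: a single hop uses the
  edge \<open>{w, v', x}\<close> with \<open>x\<close> as expansion vertex; a double hop makes \<open>x\<close> a core vertex
  between the high-codegree pairs \<open>wx\<close> and \<open>xv'\<close> and so covers two edges of the cycle.\<close>
fun hop :: "'a set set \<Rightarrow> nat \<Rightarrow> 'a \<times> 'a \<times> bool \<Rightarrow> 'a \<Rightarrow> bool" where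
  "hop H K (w, x, double) v' \<longleftrightarrow>
     (if double then K \<le> codeg H w x \<and> K \<le> codeg H x v' else {w, v', x} \<in> H)"

fun hop_skeleton :: "'a \<times> 'a \<times> bool \<Rightarrow> ('a \<times> 'a option) list" where
  "hop_skeleton (w, x, double) = (if double then [(w, None), (x, None)] else [(w, Some x)])"

lemma hop_skeleton_ne: "hop_skeleton h \<noteq> []"
  and hd_hop_skeleton: "fst (hd (hop_skeleton h)) = fst h"
  by (cases h; simp)+

lemma hop_double:
  "K \<le> codeg H w x \<Longrightarrow> K \<le> codeg H w' x \<Longrightarrow> hop H K (w, x, True) w'"
  by (simp add: codeg_def nbhd_def insert_commute)

lemma chained_hop_skeletons:
  assumes "chained (hop H K) T z"
  shows "chained (skeleton_edge H K) (concat (map hop_skeleton T)) z"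
  using assms
proof (induction T)
  case (Cons h T)
  obtain w x d where h: "h = (w, x, d)" by (cases h)
  have "next_key (concat (map hop_skeleton T)) z = next_key T z"
    unfolding next_key_def by (cases T) (auto simp: hop_skeleton_ne hd_hop_skeleton)
  moreover have "chained (skeleton_edge H K) (hop_skeleton (w, x, d)) (next_key T z)"
    using Cons.prems unfolding h by (auto simp: next_key_def)
  ultimately show ?case
    using Cons unfolding h by (simp add: chained_append del: hop_skeleton.simps)
qed simp

lemma set_hop_skeletons:
  "set (map fst (concat (map hop_skeleton T))) \<union> set (designated (concat (map hop_skeleton T)))
     = set (map fst T) \<union> set (map (fst \<circ> snd) T)"
proof (induction T)
  case (Cons h T)
  then show ?case by (cases h) (auto simp: designated_append)
qed simp

lemma length_hop_skeletons_designated: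
  "length (concat (map hop_skeleton T)) + length (designated (concat (map hop_skeleton T)))
     = 2 * length T"
proof (induction T)
  case (Cons h T)
  then show ?case by (cases h) (auto simp: designated_append)
qed simp

lemma length_hop_skeletons:
  "length (concat (map hop_skeleton T)) = length T + length (filter (snd \<circ> snd) T)"
proof (induction T)
  case (Cons h T)
  then show ?case by (cases h) auto
qed simp

lemma contains_Ck3_if_closed_hops:
  assumes "T \<noteq> []" "3 * (length T + length (filter (snd \<circ> snd) T)) \<le> K"
    and "chained (hop H K) T (fst (hd T))"
    and "distinct (map fst T @ map (fst \<circ> snd) T)"
  shows "contains_Ck3 (length T + length (filter (snd \<circ> snd) T)) H"
proof -
  define S where "S = concat (map hop_skeleton T)"
  have "fst (hd S) = fst (hd T)"
    unfolding S_def using assms(1) by (cases T) (auto simp: hop_skeleton_ne hd_hop_skeleton)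
  then have chain: "chained (skeleton_edge H K) S (fst (hd S))"
    using chained_hop_skeletons[OF assms(3)] unfolding S_def by simp
  have "card (set (map fst T @ map (fst \<circ> snd) T)) = 2 * length T"
    using distinct_card[OF assms(4)] by simp
  then have "card (set (map fst S @ designated S)) = length (map fst S @ designated S)"
    using set_hop_skeletons[of T] length_hop_skeletons_designated[of T] unfolding S_def
    by (simp only: set_append length_append length_map)
  then have "distinct (map fst S @ designated S)" by (rule card_distinct)
  moreover have "S \<noteq> []" using assms(1) unfolding S_def by (cases T) (auto simp: hop_skeleton_ne)
  ultimately show ?thesis
    using contains_Ck3_if_closed_skeleton[OF _ _ chain] assms(2) length_hop_skeletons[of T]
    unfolding S_def by simp
qed

section \<open>Cross pairs of a superfull 3-graph\<close>

lemma nbhd_commute: "nbhd H u v = nbhd H v u"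
  unfolding nbhd_def by (simp add: insert_commute)

lemma codeg_commute: "codeg H u v = codeg H v u"
  unfolding codeg_def by (simp add: nbhd_commute)

lemma superfull_codeg_ge_if_low_pair:
  assumes "is_3graph H" "superfull d K H" "{a, b, x} \<in> H" "codeg H a b < K"
  shows "K \<le> codeg H a x"
proof (rule ccontr)
  assume "\<not> K \<le> codeg H a x"
  define e where "e = {a, b, x}"
  define P where "P = {p. p \<subseteq> e \<and> card p = 2 \<and> (\<exists>u v. p = {u, v} \<and> codeg H u v < K)}"
  have "card e = 3" using assms(1,3) unfolding is_3graph_def e_def by auto
  then have "a \<noteq> b" "a \<noteq> x" "b \<noteq> x"
    unfolding e_def by (auto simp: card_insert_if split: if_splits)
  then have "{a, b} \<in> P" "{a, x} \<in> P" "{a, b} \<noteq> {a, x}"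
    using assms(4) \<open>\<not> K \<le> codeg H a x\<close> unfolding P_def e_def
    by (fastforce simp: doubleton_eq_iff)+
  moreover have "finite P" unfolding P_def e_def by (rule finite_subset[of _ "Pow {a, b, x}"]) auto
  moreover have "card P \<le> 1" using assms(2,3) unfolding superfull_def P_def e_def by blast
  ultimately show False by (auto simp: card_le_Suc0_iff_eq)
qed

lemma exists_not_in_if_card_less: "finite B \<Longrightarrow> card B < card A \<Longrightarrow> \<exists>x\<in>A. x \<notin> B"
  by (metis card_mono not_le subsetI)

lemma exists_not_in_if_card_eq:
  "finite A \<Longrightarrow> finite B \<Longrightarrow> card A = card B \<Longrightarrow> A \<noteq> B \<Longrightarrow> \<exists>y\<in>B. y \<notin> A"
  by (metis card_subset_eq subsetI)

lemma exists_not_in_avoiding_two: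
  assumes "finite X" "card X + 1 < card B" "x \<notin> B \<or> r \<notin> B"
  shows "\<exists>z\<in>B. z \<notin> X \<and> z \<noteq> x \<and> z \<noteq> r"
proof -
  have "card ({x, r} \<inter> B) \<le> 1" using assms(3) by (auto simp: card_insert_if Int_insert_left)
  then have "card (X \<union> ({x, r} \<inter> B)) < card B"
    using assms(2) card_Un_le[of X "{x, r} \<inter> B"] by linarith
  then show ?thesis using exists_not_in_if_card_less[of "X \<union> ({x, r} \<inter> B)" B] assms(1) by auto
qed

locale cross_pairs =
  fixes H :: "'a set set" and k t :: nat and W1 W2 :: "'a set"
  assumes is_3graph: "is_3graph H" and k_ge_4: "4 \<le> k" and t_def: "t = (k - 1) div 2"
    and superfull: "superfull t (3 * k) H" and disjoint: "W1 \<inter> W2 = {}"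
    and card_W1: "3 * k \<le> card W1" and card_W2: "3 * k \<le> card W2"
    and codeg_cross: "\<forall>w1\<in>W1. \<forall>w2\<in>W2. codeg H w1 w2 = t"
begin

lemma swapped: "cross_pairs H k t W2 W1"
proof
  show "\<forall>w1\<in>W2. \<forall>w2\<in>W1. codeg H w1 w2 = t"
    using codeg_cross codeg_commute by metis
qed (use is_3graph k_ge_4 t_def superfull disjoint card_W1 card_W2 in auto)

lemma t_ge_1: "1 \<le> t" using k_ge_4 t_def by simp

lemma t_less_k: "t < k" using k_ge_4 t_def by simp

text \<open>The flag \<open>k = 2 * t + 2\<close> on one hop of a closing tour absorbs the parity of \<open>k\<close>.\<close>
lemma k_eq: "k = 2 * t + 1 \<or> k = 2 * t + 2" using k_ge_4 t_def by presburger

definition cross :: "'a \<Rightarrow> 'a \<Rightarrow> bool" where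
  "cross p q \<longleftrightarrow> p \<in> W1 \<and> q \<in> W2 \<or> p \<in> W2 \<and> q \<in> W1"

lemma codeg_cross_pair: "cross p q \<Longrightarrow> codeg H p q = t"
  using codeg_cross codeg_commute unfolding cross_def by metis

lemma card_nbhd_cross: "cross p q \<Longrightarrow> card (nbhd H p q) = t"
  using codeg_cross_pair unfolding codeg_def by blast

lemma finite_nbhd_cross: "cross p q \<Longrightarrow> finite (nbhd H p q)"
  using card_nbhd_cross t_ge_1 by (metis card.infinite not_one_le_zero)

lemma nbhd_cross_high:
  assumes "cross p q" "x \<in> nbhd H p q"
  shows "3 * k \<le> codeg H p x" "3 * k \<le> codeg H q x" "x \<notin> W1" "x \<notin> W2"
proof -
  have low: "codeg H p q < 3 * k" "codeg H q p < 3 * k"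
    using codeg_cross_pair[OF assms(1)] codeg_commute[of H p q] t_less_k by simp_all
  have "{p, q, x} \<in> H" "{q, p, x} \<in> H"
    using assms(2) unfolding nbhd_def by (auto simp: insert_commute)
  then show p: "3 * k \<le> codeg H p x" and q: "3 * k \<le> codeg H q x"
    using superfull_codeg_ge_if_low_pair[OF is_3graph superfull] low by blast+
  have "\<not> cross p x" "\<not> cross q x"
    using p q codeg_cross_pair t_less_k by fastforce+
  then show "x \<notin> W1" "x \<notin> W2" using assms(1) unfolding cross_def by auto
qed

lemma hop_cross: "cross p q \<Longrightarrow> x \<in> nbhd H p q \<Longrightarrow> hop H (3 * k) (p, x, d) q"
  using nbhd_cross_high[of p q x] by (auto simp: nbhd_def codeg_commute[of H x q])

lemma exists_fresh_W1: "length xs < 3 * k \<Longrightarrow> \<exists>w\<in>W1. w \<notin> set xs"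
  using exists_not_in_if_card_less[of "set xs" W1] card_length[of xs] card_W1 by simp

lemma exists_fresh_W2: "length xs < 3 * k \<Longrightarrow> \<exists>w\<in>W2. w \<notin> set xs"
  using exists_not_in_if_card_less[of "set xs" W2] card_length[of xs] card_W2 by simp

lemma hop_cross_back: "cross p q \<Longrightarrow> x \<in> nbhd H p q \<Longrightarrow> hop H (3 * k) (q, x, d) p"
  using hop_cross[of q p x d] nbhd_commute[of H p q] unfolding cross_def by auto

text \<open>At most one of \<open>x\<close> and \<open>r\<close> is a label of \<open>p'q'\<close>, so a label of \<open>p'q'\<close> avoiding
  both costs only one label.\<close>
lemma label_avoiding:
  assumes "2 \<le> t" "cross p q" "cross p' q'" "nbhd H p q \<noteq> nbhd H p' q'"
  obtains r where "r \<in> nbhd H p q" "r \<noteq> x" "x \<notin> nbhd H p' q' \<or> r \<notin> nbhd H p' q'"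
proof -
  obtain y where y: "y \<in> nbhd H p q" "y \<notin> nbhd H p' q'"
    using exists_not_in_if_card_eq[of "nbhd H p' q'" "nbhd H p q"] assms(2-4)
      card_nbhd_cross finite_nbhd_cross by metis
  show ?thesis
  proof (cases "x = y")
    case True
    have "card {x} < card (nbhd H p q)" using card_nbhd_cross[OF assms(2)] assms(1) by simp
    then show ?thesis using that True y exists_not_in_if_card_less[of "{x}"] by blast
  qed (use that y in auto)
qed

lemma contains_Ck3_if_closed_tour:
  assumes "T \<noteq> []" "length T + length (filter (snd \<circ> snd) T) = k"
    and "chained (hop H (3 * k)) T (fst (hd T))"
    and "distinct (map fst T)" "distinct (map (fst \<circ> snd) T)"
    and "set (map fst T) \<subseteq> W1 \<union> W2" "set (map (fst \<circ> snd) T) \<inter> (W1 \<union> W2) = {}"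
  shows "contains_Ck3 k H"
  using contains_Ck3_if_closed_hops[OF assms(1) _ assms(3)] assms(2,4-7) by fastforce

lemma double_hop_path:
  assumes "1 \<le> n" "p \<in> W1 \<union> W2" "q \<in> W1 \<union> W2" "p \<noteq> q" "odd n \<longleftrightarrow> cross p q"
    and "p \<in> set Fs" "q \<in> set Fs" "length Fs + n \<le> 3 * k" "length Xs + n \<le> t"
  obtains P where "length P = n" "P \<noteq> []" "fst (hd P) = p" "chained (hop H (3 * k)) P q"
    "filter (snd \<circ> snd) P = P" "distinct (map fst P)" "distinct (map (fst \<circ> snd) P)"
    "set (map fst P) \<subseteq> insert p (W1 \<union> W2 - set Fs)"
    "set (map (fst \<circ> snd) P) \<inter> (set Xs \<union> W1 \<union> W2) = {}"
  using assms
proof (induction n arbitrary: p Fs Xs thesis)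
  case (Suc m)
  have card_Fs: "card (set Fs) + Suc m \<le> 3 * k" and card_Xs: "card (set Xs) < t"
    using Suc.prems(9,10) card_length[of Fs] card_length[of Xs] by linarith+
  show ?case
  proof (cases "m = 0")
    case True
    then have pq: "cross p q" using Suc.prems(6) by simp
    obtain x where x: "x \<in> nbhd H p q" "x \<notin> set Xs"
      using exists_not_in_if_card_less card_Xs card_nbhd_cross[OF pq] by (metis List.finite_set)
    show ?thesis
      using Suc.prems(1)[of "[(p, x, True)]"] True hop_cross[OF pq x(1)] x
        nbhd_cross_high[OF pq x(1)]
      by (auto simp: next_key_def)
  next
    case False
    define Wo where "Wo = (if p \<in> W1 then W2 else W1)"
    have "card (set Fs) < card Wo" using card_Fs card_W1 card_W2 unfolding Wo_def by simp
    then obtain w where w: "w \<in> Wo" "w \<notin> set Fs" using exists_not_in_if_card_less by blast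
    have pw: "cross p w" "w \<in> W1 \<union> W2"
      using w(1) Suc.prems(3) disjoint unfolding Wo_def cross_def by (cases "p \<in> W1"; auto)+
    obtain x where x: "x \<in> nbhd H p w" "x \<notin> set Xs"
      using exists_not_in_if_card_less card_Xs card_nbhd_cross[OF pw(1)] by (metis List.finite_set)
    have parity: "odd m \<longleftrightarrow> cross w q"
      using Suc.prems(3,4,6) pw disjoint unfolding cross_def by auto
    have wq: "w \<noteq> q" "q \<in> set (w # Fs)" using w Suc.prems(8) by auto
    have len_Fs: "length (w # Fs) + m \<le> 3 * k" and len_Xs: "length (x # Xs) + m \<le> t"
      using Suc.prems(9,10) by simp_all
    obtain P where P: "length P = m" "P \<noteq> []" "fst (hd P) = w"
        "chained (hop H (3 * k)) P q" "filter (snd \<circ> snd) P = P"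
        "distinct (map fst P)" "distinct (map (fst \<circ> snd) P)"
        "set (map fst P) \<subseteq> insert w (W1 \<union> W2 - set (w # Fs))"
        "set (map (fst \<circ> snd) P) \<inter> (set (x # Xs) \<union> W1 \<union> W2) = {}"
      using Suc.IH[where p = w and Fs = "w # Fs" and Xs = "x # Xs",
          OF _ _ pw(2) Suc.prems(4) wq(1) parity _ wq(2) len_Fs len_Xs] False
      by (metis One_nat_def list.set_intros(1) not_less_eq_eq le_zero_eq)
    have "p \<notin> set (map fst P)" "x \<notin> set (map (fst \<circ> snd) P)"
      using P(8,9) w Suc.prems(7) by auto
    then show ?thesis
      using P pw w x(2) nbhd_cross_high[OF pw(1) x(1)] hop_cross[OF pw(1) x(1)]
      by (intro Suc.prems(1)[of "(p, x, True) # P"]) (auto simp: next_key_def o_def)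
  qed
qed simp

section \<open>Tours through cross pairs with different labels\<close>

lemma cycle_odd:
  assumes "odd t" "3 \<le> t" "a \<in> W1" "b \<in> W2" "b' \<in> W2" "b \<noteq> b'"
    and "nbhd H a b \<noteq> nbhd H a b'"
  shows "contains_Ck3 k H"
proof -
  have ab: "cross a b" "cross a b'" using assms(3-5) unfolding cross_def by auto
  obtain y where y: "y \<in> nbhd H a b'" "y \<notin> nbhd H a b"
    using exists_not_in_if_card_eq[of "nbhd H a b" "nbhd H a b'"] assms(7)
      card_nbhd_cross finite_nbhd_cross ab by metis
  have parity: "odd (t - 1) \<longleftrightarrow> cross b' b"
    using assms(1,2,4,5) disjoint unfolding cross_def by auto
  have len: "1 \<le> t - 1" "length [a, b, b'] + (t - 1) \<le> 3 * k" "length [y] + (t - 1) \<le> t"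
    using assms(2) t_less_k by simp_all
  have ends: "b' \<in> W1 \<union> W2" "b \<in> W1 \<union> W2" "b' \<noteq> b" "b' \<in> set [a, b, b']" "b \<in> set [a, b, b']"
    using assms(4-6) by auto
  obtain P where P: "length P = t - 1" "P \<noteq> []" "fst (hd P) = b'"
      "chained (hop H (3 * k)) P b" "filter (snd \<circ> snd) P = P"
      "distinct (map fst P)" "distinct (map (fst \<circ> snd) P)"
      "set (map fst P) \<subseteq> insert b' (W1 \<union> W2 - set [a, b, b'])"
      "set (map (fst \<circ> snd) P) \<inter> (set [y] \<union> W1 \<union> W2) = {}"
    by (rule double_hop_path[OF len(1) ends(1-3) parity ends(4,5) len(2,3)])
  define X where "X = set (map (fst \<circ> snd) P)"
  have "card X < card (nbhd H a b)"
    using card_length[of "map (fst \<circ> snd) P"] P(1) card_nbhd_cross[OF ab(1)] assms(2)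
    unfolding X_def by simp
  \<comment> \<open>Since \<open>y \<notin> N(ab)\<close>, \<open>z\<close> only has to avoid the \<open>t - 1\<close> path labels.\<close>
  then obtain z where z: "z \<in> nbhd H a b" "z \<notin> X"
    using exists_not_in_if_card_less unfolding X_def by blast
  define T where "T = [(a, y, k = 2 * t + 2)] @ P @ [(b, z, True)]"
  show ?thesis
  proof (rule contains_Ck3_if_closed_tour[of T])
    show "length T + length (filter (snd \<circ> snd) T) = k"
      unfolding T_def using P(1,5) k_eq assms(2) by auto
    show "chained (hop H (3 * k)) T (fst (hd T))"
      unfolding T_def using hop_cross[OF ab(2) y(1)] hop_cross_back[OF ab(1) z(1)] P(2-4)
      by (simp add: chained_append next_key_def del: hop.simps)
    show "distinct (map fst T)" "set (map fst T) \<subseteq> W1 \<union> W2"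
      unfolding T_def using P(6,8) assms(3-6) disjoint by auto
    show "distinct (map (fst \<circ> snd) T)" "set (map (fst \<circ> snd) T) \<inter> (W1 \<union> W2) = {}"
      unfolding T_def using P(7,9) y z nbhd_cross_high[OF ab(1) z(1)] nbhd_cross_high[OF ab(2) y(1)]
      unfolding X_def by auto
  qed (simp add: T_def)
qed

lemma cycle_even_shared_label_unequal:
  assumes "even t" "4 \<le> t" "w1 \<in> W1" "w2 \<in> W1" "w1 \<noteq> w2"
    and "3 * k \<le> codeg H w1 x" "3 * k \<le> codeg H w2 x" "x \<notin> W1" "x \<notin> W2"
    and "f \<in> W2" "f' \<in> W2" "f \<noteq> f'" "nbhd H w2 f \<noteq> nbhd H w1 f'"
  shows "contains_Ck3 k H"
proof -
  have cr: "cross w2 f" "cross w1 f'" using assms(3,4,10,11) unfolding cross_def by auto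
  obtain rA where rA: "rA \<in> nbhd H w2 f" "rA \<noteq> x" "x \<notin> nbhd H w1 f' \<or> rA \<notin> nbhd H w1 f'"
    by (rule label_avoiding[OF _ cr(1,2) assms(13), where x = x]) (use assms(2) in simp)
  have parity: "odd (t - 2) \<longleftrightarrow> cross f f'"
    using assms(1,2,10,11) disjoint unfolding cross_def by auto
  have len: "1 \<le> t - 2" "length [w1, w2, f, f'] + (t - 2) \<le> 3 * k"
      "length [x, rA] + (t - 2) \<le> t"
    using assms(2) t_less_k by simp_all
  have ends: "f \<in> W1 \<union> W2" "f' \<in> W1 \<union> W2" "f \<noteq> f'"
      "f \<in> set [w1, w2, f, f']" "f' \<in> set [w1, w2, f, f']"
    using assms(10-12) by auto
  obtain P where P: "length P = t - 2" "P \<noteq> []" "fst (hd P) = f"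
      "chained (hop H (3 * k)) P f'" "filter (snd \<circ> snd) P = P"
      "distinct (map fst P)" "distinct (map (fst \<circ> snd) P)"
      "set (map fst P) \<subseteq> insert f (W1 \<union> W2 - set [w1, w2, f, f'])"
      "set (map (fst \<circ> snd) P) \<inter> (set [x, rA] \<union> W1 \<union> W2) = {}"
    by (rule double_hop_path[OF len(1) ends(1-3) parity ends(4,5) len(2,3)])
  define X where "X = set (map (fst \<circ> snd) P)"
  have "card X + 1 < card (nbhd H w1 f')"
    using card_length[of "map (fst \<circ> snd) P"] P(1) card_nbhd_cross[OF cr(2)] assms(2)
    unfolding X_def by simp
  then obtain rB where rB: "rB \<in> nbhd H w1 f'" "rB \<notin> X" "rB \<noteq> x" "rB \<noteq> rA"
    using exists_not_in_avoiding_two[of X "nbhd H w1 f'" x rA] rA(3) unfolding X_def by auto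
  define T where "T = [(w1, x, True), (w2, rA, k = 2 * t + 2)] @ P @ [(f', rB, True)]"
  show ?thesis
  proof (rule contains_Ck3_if_closed_tour[of T])
    show "length T + length (filter (snd \<circ> snd) T) = k"
      unfolding T_def using P(1,5) k_eq assms(2) by auto
    show "chained (hop H (3 * k)) T (fst (hd T))"
      unfolding T_def using hop_double[OF assms(6,7)] hop_cross[OF cr(1) rA(1)]
        hop_cross_back[OF cr(2) rB(1)] P(2-4)
      by (simp add: chained_append next_key_def del: hop.simps)
    show "distinct (map fst T)" "set (map fst T) \<subseteq> W1 \<union> W2"
      unfolding T_def using P(6,8) assms(3-5,10-12) disjoint by auto
    show "distinct (map (fst \<circ> snd) T)" "set (map (fst \<circ> snd) T) \<inter> (W1 \<union> W2) = {}"
      unfolding T_def using P(7,9) rA rB assms(8,9) nbhd_cross_high[OF cr(1) rA(1)]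
        nbhd_cross_high[OF cr(2) rB(1)]
      unfolding X_def by auto
  qed (simp add: T_def)
qed

lemma cycle_even_shared_label_equal:
  assumes "even t" "4 \<le> t" "w1 \<in> W1" "w2 \<in> W1" "w1 \<noteq> w2"
    and "3 * k \<le> codeg H w1 x" "3 * k \<le> codeg H w2 x" "x \<notin> W1" "x \<notin> W2"
    and "f \<in> W2" "f' \<in> W2" "f \<noteq> f'" "e \<in> W1" "e \<noteq> w1" "e \<noteq> w2"
    and "nbhd H w1 f' = nbhd H w2 f" "nbhd H e f \<noteq> nbhd H w2 f"
  shows "contains_Ck3 k H"
proof -
  have cr: "cross w2 f" "cross w1 f'" "cross e f"
    using assms(3,4,10,11,13) unfolding cross_def by auto
  obtain rE where rE: "rE \<in> nbhd H e f" "rE \<noteq> x" "x \<notin> nbhd H w2 f \<or> rE \<notin> nbhd H w2 f"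
    by (rule label_avoiding[OF _ cr(3,1) assms(17), where x = x]) (use assms(2) in simp)
  have "card {x, rE} < card (nbhd H w2 f)"
    using card_nbhd_cross[OF cr(1)] assms(2) card_length[of "[x, rE]"] by simp
  then obtain rA where rA: "rA \<in> nbhd H w2 f" "rA \<notin> {x, rE}"
    using exists_not_in_if_card_less[of "{x, rE}"] by blast
  have parity: "odd (t - 3) \<longleftrightarrow> cross e f'"
    using assms(1,2,11,13) disjoint unfolding cross_def by auto
  have len: "1 \<le> t - 3" "length [w1, w2, f, e, f'] + (t - 3) \<le> 3 * k"
      "length [x, rE, rA] + (t - 3) \<le> t"
    using assms(2) t_less_k by simp_all
  have ends: "e \<in> W1 \<union> W2" "f' \<in> W1 \<union> W2" "e \<noteq> f'"
      "e \<in> set [w1, w2, f, e, f']" "f' \<in> set [w1, w2, f, e, f']"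
    using assms(11,13) disjoint by auto
  obtain P where P: "length P = t - 3" "P \<noteq> []" "fst (hd P) = e"
      "chained (hop H (3 * k)) P f'" "filter (snd \<circ> snd) P = P"
      "distinct (map fst P)" "distinct (map (fst \<circ> snd) P)"
      "set (map fst P) \<subseteq> insert e (W1 \<union> W2 - set [w1, w2, f, e, f'])"
      "set (map (fst \<circ> snd) P) \<inter> (set [x, rE, rA] \<union> W1 \<union> W2) = {}"
    by (rule double_hop_path[OF len(1) ends(1-3) parity ends(4,5) len(2,3)])
  define X where "X = set (map (fst \<circ> snd) P)"
  have "card (insert rA X) + 1 < card (nbhd H w2 f)"
    using card_length[of "map (fst \<circ> snd) P"] P(1,9) card_nbhd_cross[OF cr(1)] assms(2)
    unfolding X_def by (auto simp: card_insert_if)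
  then obtain rB where rB: "rB \<in> nbhd H w2 f" "rB \<notin> insert rA X" "rB \<noteq> x" "rB \<noteq> rE"
    using exists_not_in_avoiding_two[of "insert rA X" "nbhd H w2 f" x rE] rE(3)
    unfolding X_def by auto
  define T where
    "T = [(w1, x, True), (w2, rA, k = 2 * t + 2), (f, rE, True)] @ P @ [(f', rB, True)]"
  show ?thesis
  proof (rule contains_Ck3_if_closed_tour[of T])
    show "length T + length (filter (snd \<circ> snd) T) = k"
      unfolding T_def using P(1,5) k_eq assms(2) by auto
    show "chained (hop H (3 * k)) T (fst (hd T))"
      unfolding T_def using hop_double[OF assms(6,7)] hop_cross[OF cr(1) rA(1)]
        hop_cross_back[OF cr(3) rE(1)] hop_cross_back[OF cr(2)] rB(1) assms(16) P(2-4)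
      by (simp add: chained_append next_key_def del: hop.simps)
    show "distinct (map fst T)" "set (map fst T) \<subseteq> W1 \<union> W2"
      unfolding T_def using P(6,8) assms(3-5,10-15) disjoint by auto
    show "distinct (map (fst \<circ> snd) T)" "set (map (fst \<circ> snd) T) \<inter> (W1 \<union> W2) = {}"
      unfolding T_def using P(7,9) rA rB rE assms(8,9) nbhd_cross_high[OF cr(1) rA(1)]
        nbhd_cross_high[OF cr(1) rB(1)] nbhd_cross_high[OF cr(3) rE(1)]
      unfolding X_def by auto
  qed (simp add: T_def)
qed

lemma cycle_even_shared_label:
  assumes "even t" "4 \<le> t" "w1 \<in> W1" "w2 \<in> W1" "w1 \<noteq> w2"
    and "3 * k \<le> codeg H w1 x" "3 * k \<le> codeg H w2 x" "x \<notin> W1" "x \<notin> W2"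
    and "a \<in> W1" "b \<in> W2" "a' \<in> W1" "b' \<in> W2" "nbhd H a b \<noteq> nbhd H a' b'"
  shows "contains_Ck3 k H"
proof (cases "\<exists>f\<in>W2. \<exists>f'\<in>W2. f \<noteq> f' \<and> nbhd H w2 f \<noteq> nbhd H w1 f'")
  case True
  then show ?thesis using cycle_even_shared_label_unequal[OF assms(1-9)] by blast
next
  case False
  then have F: "nbhd H w2 f = nbhd H w1 f'" if "f \<in> W2" "f' \<in> W2" "f \<noteq> f'" for f f'
    using that by blast
  have k: "2 < 3 * k" "1 < 3 * k" using k_ge_4 by simp_all
  have row2: "nbhd H w2 f = nbhd H w2 g" if "f \<in> W2" "g \<in> W2" for f g
  proof -
    obtain h where h: "h \<in> W2" "h \<notin> set [f, g]" using exists_fresh_W2[of "[f, g]"] k(1) by auto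
    then show ?thesis using F[OF that(1) h(1)] F[OF that(2) h(1)] by auto
  qed
  have row1: "nbhd H w1 f = nbhd H w2 f" if "f \<in> W2" for f
  proof -
    obtain g where g: "g \<in> W2" "g \<notin> set [f]" using exists_fresh_W2[of "[f]"] k(2) by auto
    then show ?thesis using F[OF g(1) that] row2[OF g(1) that] by auto
  qed
  obtain e f where ef: "e \<in> W1" "f \<in> W2" "nbhd H e f \<noteq> nbhd H w2 f"
  proof (cases "nbhd H a b = nbhd H w2 b")
    case True
    then have "nbhd H a' b' \<noteq> nbhd H w2 b'" using assms(14) row2[OF assms(11,13)] by simp
    then show ?thesis using that assms(12,13) by blast
  qed (use that assms(10,11) in blast)
  obtain f' where f': "f' \<in> W2" "f' \<notin> set [f]" using exists_fresh_W2[of "[f]"] k(2) by auto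
  have "e \<noteq> w1" "e \<noteq> w2" using ef(3) row1[OF ef(2)] by auto
  moreover have "nbhd H w1 f' = nbhd H w2 f" using row1[OF f'(1)] row2[OF f'(1) ef(2)] by simp
  ultimately show ?thesis
    using cycle_even_shared_label_equal[OF assms(1-9) ef(2) f'(1) _ ef(1)] ef(3) f'(2) by simp
qed

lemma cycle_even_disjoint:
  assumes "even t" "2 \<le> t"
    and "\<And>a b a' b'. a \<in> W1 \<Longrightarrow> b \<in> W2 \<Longrightarrow> a' \<in> W1 \<Longrightarrow> b' \<in> W2 \<Longrightarrow> (a, b) \<noteq> (a', b')
      \<Longrightarrow> nbhd H a b \<inter> nbhd H a' b' = {}"
  shows "contains_Ck3 k H"
proof -
  have k: "0 < 3 * k" "1 < 3 * k" using k_ge_4 by simp_all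
  obtain a where a: "a \<in> W1" using exists_fresh_W1[of "[]"] k(1) by auto
  obtain b where b: "b \<in> W2" using exists_fresh_W2[of "[]"] k(1) by auto
  obtain a' where a': "a' \<in> W1" "a' \<noteq> a" using exists_fresh_W1[of "[a]"] k(2) by auto
  obtain b'' where b'': "b'' \<in> W2" "b'' \<noteq> b" using exists_fresh_W2[of "[b]"] k(2) by auto
  have cr: "cross a b" "cross b a'" "cross a' b''" "cross a' b"
    using a b a' b'' unfolding cross_def by auto
  have parity: "odd (t - 1) \<longleftrightarrow> cross b'' a"
    using assms(1,2) a b'' unfolding cross_def by auto
  have len: "1 \<le> t - 1" "length [a, a', b, b''] + (t - 1) \<le> 3 * k" "length [] + (t - 1) \<le> t"
    using assms(2) t_less_k by simp_all
  have ends: "b'' \<in> W1 \<union> W2" "a \<in> W1 \<union> W2" "b'' \<noteq> a"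
      "b'' \<in> set [a, a', b, b'']" "a \<in> set [a, a', b, b'']"
    using a b'' disjoint by auto
  obtain P where P: "length P = t - 1" "P \<noteq> []" "fst (hd P) = b''"
      "chained (hop H (3 * k)) P a" "filter (snd \<circ> snd) P = P"
      "distinct (map fst P)" "distinct (map (fst \<circ> snd) P)"
      "set (map fst P) \<subseteq> insert b'' (W1 \<union> W2 - set [a, a', b, b''])"
      "set (map (fst \<circ> snd) P) \<inter> (set [] \<union> W1 \<union> W2) = {}"
    by (rule double_hop_path[OF len(1) ends(1-3) parity ends(4,5) len(2,3)])
  define X where "X = set (map (fst \<circ> snd) P)"
  have small: "card X < t"
    using card_length[of "map (fst \<circ> snd) P"] P(1) assms(2) unfolding X_def by simp
  \<comment> \<open>Chosen after the path, each \<open>r\<^sub>i\<close> only has to avoid its \<open>t - 1\<close> labels; the \<open>r\<^sub>i\<close> are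
    distinct because label sets of distinct cross pairs are disjoint.\<close>
  obtain r0 where r0: "r0 \<in> nbhd H a b" "r0 \<notin> X"
    using exists_not_in_if_card_less[of X] small card_nbhd_cross[OF cr(1)] unfolding X_def by auto
  obtain r1 where r1: "r1 \<in> nbhd H a' b" "r1 \<notin> X"
    using exists_not_in_if_card_less[of X] small card_nbhd_cross[OF cr(4)] unfolding X_def by auto
  obtain r2 where r2: "r2 \<in> nbhd H a' b''" "r2 \<notin> X"
    using exists_not_in_if_card_less[of X] small card_nbhd_cross[OF cr(3)] unfolding X_def by auto
  have "r0 \<noteq> r1" "r0 \<noteq> r2" "r1 \<noteq> r2"
    using assms(3)[of a b a' b] assms(3)[of a b a' b''] assms(3)[of a' b a' b''] a b a' b'' r0 r1 r2
    by auto
  define T where "T = [(a, r0, False), (b, r1, False), (a', r2, k = 2 * t + 2)] @ P"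
  show ?thesis
  proof (rule contains_Ck3_if_closed_tour[of T])
    show "length T + length (filter (snd \<circ> snd) T) = k"
      unfolding T_def using P(1,5) k_eq assms(2) by auto
    show "chained (hop H (3 * k)) T (fst (hd T))"
      unfolding T_def using hop_cross[OF cr(1) r0(1)] hop_cross_back[OF cr(4) r1(1)]
        hop_cross[OF cr(3) r2(1)] P(2-4)
      by (simp add: chained_append next_key_def del: hop.simps)
    show "distinct (map fst T)" "set (map fst T) \<subseteq> W1 \<union> W2"
      unfolding T_def using P(6,8) a b a' b'' disjoint by auto
    show "distinct (map (fst \<circ> snd) T)" "set (map (fst \<circ> snd) T) \<inter> (W1 \<union> W2) = {}"
      unfolding T_def using P(7,9) r0 r1 r2 \<open>r0 \<noteq> r1\<close> \<open>r0 \<noteq> r2\<close> \<open>r1 \<noteq> r2\<close>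
        nbhd_cross_high[OF cr(1) r0(1)] nbhd_cross_high[OF cr(4) r1(1)]
        nbhd_cross_high[OF cr(3) r2(1)]
      unfolding X_def by auto
  qed (simp add: T_def)
qed

lemma cycle_t2_shared_label:
  assumes "t = 2" "w1 \<in> W1" "w2 \<in> W1" "w1 \<noteq> w2"
    and "3 * k \<le> codeg H w1 x" "3 * k \<le> codeg H w2 x" "x \<notin> W1" "x \<notin> W2"
    and "f \<in> W2" "nbhd H w2 f \<noteq> nbhd H w1 f"
  shows "contains_Ck3 k H"
proof -
  have cr: "cross w2 f" "cross w1 f" using assms(2,3,9) unfolding cross_def by auto
  obtain rA where rA: "rA \<in> nbhd H w2 f" "rA \<noteq> x" "x \<notin> nbhd H w1 f \<or> rA \<notin> nbhd H w1 f"
    by (rule label_avoiding[OF _ cr(1,2) assms(10), where x = x]) (use assms(1) in simp)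
  have "card {} + 1 < card (nbhd H w1 f)" using card_nbhd_cross[OF cr(2)] assms(1) by simp
  then obtain rB where rB: "rB \<in> nbhd H w1 f" "rB \<noteq> x" "rB \<noteq> rA"
    using exists_not_in_avoiding_two[of "{}" "nbhd H w1 f" x rA] rA(3) by auto
  define T where "T = [(w1, x, True), (w2, rA, k = 2 * t + 2), (f, rB, True)]"
  show ?thesis
  proof (rule contains_Ck3_if_closed_tour[of T])
    show "length T + length (filter (snd \<circ> snd) T) = k"
      unfolding T_def using k_eq assms(1) by auto
    show "chained (hop H (3 * k)) T (fst (hd T))"
      unfolding T_def using hop_double[OF assms(5,6)] hop_cross[OF cr(1) rA(1)]
        hop_cross_back[OF cr(2) rB(1)]
      by (simp add: next_key_def del: hop.simps)
  qed (use assms(2-4,7-9) rA(2) rB(2,3) nbhd_cross_high[OF cr(1) rA(1)]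
      nbhd_cross_high[OF cr(2) rB(1)] disjoint in \<open>auto simp: T_def\<close>)
qed

lemma cycle_t2_disjoint:
  assumes "t = 2" "a \<in> W1" "a' \<in> W1" "a \<noteq> a'" "b \<in> W2" "b' \<in> W2" "b \<noteq> b'"
    and "(nbhd H a b \<union> nbhd H a b') \<inter> (nbhd H a' b \<union> nbhd H a' b') = {}"
  shows "contains_Ck3 k H"
proof -
  have cr: "cross a b" "cross a' b'" "cross a b'" "cross a' b"
    using assms(2,3,5,6) unfolding cross_def by auto
  have two: "card (nbhd H a b) = 2" "card (nbhd H a' b) = 2" "card (nbhd H a b') = 2"
      "card (nbhd H a' b') = 2"
    using card_nbhd_cross cr assms(1) by auto
  obtain r1 where r1: "r1 \<in> nbhd H a b" using two(1) by fastforce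
  obtain r2 where r2: "r2 \<in> nbhd H a' b" using two(2) by fastforce
  obtain r3 where r3: "r3 \<in> nbhd H a' b'" "r3 \<noteq> r2"
    using exists_not_in_if_card_less[of "{r2}" "nbhd H a' b'"] two(4) by auto
  obtain r4 where r4: "r4 \<in> nbhd H a b'" "r4 \<noteq> r1"
    using exists_not_in_if_card_less[of "{r1}" "nbhd H a b'"] two(3) by auto
  define T where "T = [(a, r1, False), (b, r2, True), (a', r3, False), (b', r4, k = 2 * t + 2)]"
  show ?thesis
  proof (rule contains_Ck3_if_closed_tour[of T])
    show "length T + length (filter (snd \<circ> snd) T) = k"
      unfolding T_def using k_eq assms(1) by auto
    show "chained (hop H (3 * k)) T (fst (hd T))"
      unfolding T_def using hop_cross[OF cr(1) r1] hop_cross_back[OF cr(4) r2]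
        hop_cross[OF cr(2) r3(1)] hop_cross_back[OF cr(3) r4(1)]
      by (simp add: next_key_def del: hop.simps)
  qed (use assms(2-8) r1 r2 r3 r4 nbhd_cross_high[OF cr(1) r1] nbhd_cross_high[OF cr(4) r2]
      nbhd_cross_high[OF cr(2) r3(1)] nbhd_cross_high[OF cr(3) r4(1)] disjoint
      in \<open>auto simp: T_def\<close>)
qed

lemma cycle_t2:
  assumes "t = 2" "b \<in> W2" "a \<in> W1" "a' \<in> W1" "a \<noteq> a'" "nbhd H a b \<noteq> nbhd H a' b"
  shows "contains_Ck3 k H"
proof -
  obtain b' where b': "b' \<in> W2" "b' \<noteq> b" using exists_fresh_W2[of "[b]"] k_ge_4 by auto
  have cr: "cross a b" "cross a' b" "cross a b'" "cross a' b'"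
    using assms(2-4) b' unfolding cross_def by auto
  show ?thesis
  proof (cases "(nbhd H a b \<union> nbhd H a b') \<inter> (nbhd H a' b \<union> nbhd H a' b') = {}")
    case True
    show ?thesis by (rule cycle_t2_disjoint[OF assms(1,3,4,5,2) b'(1) b'(2)[symmetric] True])
  next
    case False
    then obtain x where "x \<in> nbhd H a b \<union> nbhd H a b'" "x \<in> nbhd H a' b \<union> nbhd H a' b'" by blast
    then have "3 * k \<le> codeg H a x" "3 * k \<le> codeg H a' x" "x \<notin> W1" "x \<notin> W2"
      using nbhd_cross_high cr by blast+
    then show ?thesis
      using cycle_t2_shared_label[OF assms(1,4,3) _ _ _ _ _ assms(2)] assms(5,6) by metis
  qed
qed

lemma cycle_t1:
  assumes "t = 1" "a \<in> W1" "b \<in> W2" "b' \<in> W2" "b \<noteq> b'" "nbhd H a b \<noteq> nbhd H a b'"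
  shows "contains_Ck3 k H"
proof -
  have k: "k = 4" using k_eq k_ge_4 assms(1) by auto
  obtain a' where a': "a' \<in> W1" "a' \<noteq> a" using exists_fresh_W1[of "[a]"] k by auto
  have cr: "cross a b" "cross a b'" "cross a' b" "cross a' b'"
    using assms(2-4) a' unfolding cross_def by auto
  obtain x y p q where
    xypq: "nbhd H a b = {x}" "nbhd H a b' = {y}" "nbhd H a' b = {p}" "nbhd H a' b' = {q}"
    using card_nbhd_cross[OF cr(1)] card_nbhd_cross[OF cr(2)] card_nbhd_cross[OF cr(3)]
      card_nbhd_cross[OF cr(4)] assms(1) by (metis card_1_singletonE)
  have l: "x \<in> nbhd H a b" "y \<in> nbhd H a b'" "p \<in> nbhd H a' b" "q \<in> nbhd H a' b'"
    using xypq by auto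
  have "x \<noteq> y" using xypq assms(6) by auto
  note basics = this assms(2-5) a' disjoint k
    nbhd_cross_high[OF cr(1) l(1)] nbhd_cross_high[OF cr(2) l(2)]
    nbhd_cross_high[OF cr(3) l(3)] nbhd_cross_high[OF cr(4) l(4)]
    hop_cross[OF cr(1) l(1)] hop_cross_back[OF cr(1) l(1)]
    hop_cross[OF cr(2) l(2)] hop_cross_back[OF cr(2) l(2)]
    hop_cross[OF cr(3) l(3)] hop_cross_back[OF cr(3) l(3)]
    hop_cross[OF cr(4) l(4)] hop_cross_back[OF cr(4) l(4)]
  note next_key_def[simp] hop.simps[simp del]
  consider "p = y" | "q = x" | "p = x" "q = y" | "p = x" "q \<noteq> x" "q \<noteq> y"
    | "q = y" "p \<noteq> x" "p \<noteq> y" | "p = q" "p \<noteq> x" "p \<noteq> y"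
    | "p \<noteq> q" "p \<noteq> x" "p \<noteq> y" "q \<noteq> x" "q \<noteq> y"
    by blast
  then show ?thesis
  proof cases
    case 1
    show ?thesis
      by (rule contains_Ck3_if_closed_tour[of "[(a, x, True), (b, y, True)]"])
        (use 1 basics hop_double[of "3 * k" H b y a] in auto)
  next
    case 2
    show ?thesis
      by (rule contains_Ck3_if_closed_tour[of "[(a, y, True), (b', x, True)]"])
        (use 2 basics hop_double[of "3 * k" H b' x a] in auto)
  next
    case 3
    show ?thesis
      by (rule contains_Ck3_if_closed_tour[of "[(a, x, True), (a', y, True)]"])
        (use 3 basics hop_double[of "3 * k" H a x a'] hop_double[of "3 * k" H a' y a]
          in auto)
  next
    case 4
    show ?thesis
      by (rule contains_Ck3_if_closed_tour[of "[(a', q, False), (b', y, False), (a, x, True)]"])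
        (use 4 basics hop_double[of "3 * k" H a x a'] in auto)
  next
    case 5
    show ?thesis
      by (rule contains_Ck3_if_closed_tour[of "[(a', p, False), (b, x, False), (a, y, True)]"])
        (use 5 basics hop_double[of "3 * k" H a y a'] in auto)
  next
    case 6
    show ?thesis
      by (rule contains_Ck3_if_closed_tour[of "[(b, x, False), (a, y, False), (b', p, True)]"])
        (use 6 basics hop_double[of "3 * k" H b' p b] in auto)
  next
    case 7
    show ?thesis
      by (rule contains_Ck3_if_closed_tour
          [of "[(a, x, False), (b, p, False), (a', q, False), (b', y, False)]"])
        (use 7 basics in auto)
  qed
qed

lemma cycle_even:
  assumes "even t" "4 \<le> t" "a \<in> W1" "b \<in> W2" "a' \<in> W1" "b' \<in> W2"
    and "nbhd H a b \<noteq> nbhd H a' b'"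
  shows "contains_Ck3 k H"
proof (cases "\<forall>u\<in>W1. \<forall>v\<in>W2. \<forall>u'\<in>W1. \<forall>v'\<in>W2. (u, v) \<noteq> (u', v') \<longrightarrow>
    nbhd H u v \<inter> nbhd H u' v' = {}")
  case True
  then show ?thesis using cycle_even_disjoint[OF assms(1)] assms(2) by simp
next
  case False
  then obtain u v u' v' x where uv: "u \<in> W1" "v \<in> W2" "u' \<in> W1" "v' \<in> W2" "(u, v) \<noteq> (u', v')"
    and x: "x \<in> nbhd H u v" "x \<in> nbhd H u' v'" by blast
  have "cross u v" "cross u' v'" using uv unfolding cross_def by auto
  note high = nbhd_cross_high[OF this(1) x(1)] nbhd_cross_high[OF this(2) x(2)]
  show ?thesis
  proof (cases "u = u'")
    case False
    then show ?thesis
      using cycle_even_shared_label[OF assms(1,2) uv(1,3) False] high assms(3-7) by blast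
  next
    case True
    then have "v \<noteq> v'" using uv(5) by simp
    moreover have "nbhd H b a \<noteq> nbhd H b' a'" using assms(7) nbhd_commute by metis
    ultimately show ?thesis
      using cross_pairs.cycle_even_shared_label[OF swapped assms(1,2) uv(2,4)] high assms(3-6)
      by blast
  qed
qed

lemma cycle_if_row_differs:
  assumes "a \<in> W1" "b \<in> W2" "b' \<in> W2" "b \<noteq> b'" "nbhd H a b \<noteq> nbhd H a b'"
  shows "contains_Ck3 k H"
proof -
  have "t = 1 \<or> t = 2 \<or> odd t \<and> 3 \<le> t \<or> even t \<and> 4 \<le> t" using t_ge_1 by presburger
  then consider "t = 1" | "t = 2" | "odd t" "3 \<le> t" | "even t" "4 \<le> t" by blast
  then show ?thesis
  proof cases
    case 1
    then show ?thesis using cycle_t1 assms by blast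
  next
    case 2
    have "nbhd H b a \<noteq> nbhd H b' a" using assms(5) nbhd_commute by metis
    then show ?thesis using cross_pairs.cycle_t2[OF swapped 2 assms(1-4)] by blast
  next
    case 3
    then show ?thesis using cycle_odd assms by blast
  next
    case 4
    then show ?thesis using cycle_even assms by blast
  qed
qed

lemma cycle_if_nbhds_differ:
  assumes "a \<in> W1" "b \<in> W2" "a' \<in> W1" "b' \<in> W2" "nbhd H a b \<noteq> nbhd H a' b'"
  shows "contains_Ck3 k H"
proof (cases "nbhd H a b = nbhd H a b'")
  case True
  then have "a \<noteq> a'" "nbhd H b' a \<noteq> nbhd H b' a'"
    using assms(5) by (auto simp: nbhd_commute[of H b'])
  then show ?thesis using cross_pairs.cycle_if_row_differs[OF swapped assms(4,1,3)] by blast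
next
  case False
  then show ?thesis using cycle_if_row_differs[OF assms(1,2,4)] by blast
qed

end

theorem lemma2p22:
  fixes H :: "'a set set" and k t :: nat and W1 W2 :: "'a set"
  assumes "is_3graph H"
    and "k \<ge> 4"
    and "t = (k - 1) div 2"
    and "superfull t (3 * k) H"
    and "W1 \<subseteq> verts H" and "W2 \<subseteq> verts H" and "W1 \<inter> W2 = {}"
    and "card W1 \<ge> 3 * k" and "card W2 \<ge> 3 * k"
    and "\<forall>w1\<in>W1. \<forall>w2\<in>W2. codeg H w1 w2 = t"
    and "\<not> contains_Ck3 k H"
  shows "\<exists>L. L \<subseteq> verts H - (W1 \<union> W2) \<and> card L = t \<and>
           (\<forall>w1\<in>W1. \<forall>w2\<in>W2. nbhd H w1 w2 = L)"
proof -
  interpret cross_pairs H k t W1 W2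
    using assms(1-4,7-10) by unfold_locales
  obtain a b where ab: "a \<in> W1" "b \<in> W2"
    using exists_fresh_W1[of "[]"] exists_fresh_W2[of "[]"] assms(2) by auto
  then have cr: "cross a b" unfolding cross_def by simp
  have "nbhd H a b \<subseteq> verts H - (W1 \<union> W2)"
    using nbhd_cross_high[OF cr] unfolding nbhd_def verts_def by blast
  moreover have "card (nbhd H a b) = t" by (rule card_nbhd_cross[OF cr])
  moreover have "\<forall>w1\<in>W1. \<forall>w2\<in>W2. nbhd H w1 w2 = nbhd H a b"
    using cycle_if_nbhds_differ ab assms(11) by blast
  ultimately show ?thesis by blast
qed

end
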